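(* If $G$ is a special grid operator and $k\in\mathbb{Z}$, then $G'=\sigma^k G \sigma^k$ is a special grid operator and moreover $G'^\bullet = (-\tau)^k G^\bullet \tau^k$.
   Context: Let $\omega=e^{i\pi/4}$ and regard $\mathbb{Z}[\omega]$ as a subset of $\mathbb{R}^2\cong\mathbb{C}$. A grid operator is a real linear operator $G:\mathbb{R}^2\to\mathbb{R}^2$ with $G(\mathbb{Z}[\omega])\subseteq\mathbb{Z}[\omega]$; it is special if it has determinant $\pm 1$. The map $(-)^\bullet$ is $\sqrt2$-conjugation, the automorphism of $\mathbb{Z}[\omega]$ sending $a_0+a_1\omega+a_2\omega^2+a_3\omega^3$ to $a_0-a_1\omega+a_2\omega^2-a_3\omega^3$ (on $\mathbb{Q}(\sqrt2)$ it sends $a+b\sqrt2$ to $a-b\sqrt2$); for a matrix $G$, $G^\bullet$ is obtained by applying $(-)^\bullet$ to each entry. Let $\lambda=1+\sqrt2$ (so $\lambda^\bullet=-\lambda^{-1}$). The shift operators are \[ \sigma = \sqrt{\lambda^{-1}}\begin{bmatrix}\lambda & 0\\ 0 & 1\end{bmatrix},\qquad \tau = \sqrt{\lambda^{-1}}\begin{bmatrix}1 & 0\\ 0 & -\lambda\end{bmatrix}. \] *)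

theory Defs
  imports "HOL-Analysis.Analysis"
begin

definition omega :: complex where
  "omega = cis (pi / 4)"

definition Zomega :: "complex set" where
  "Zomega = {of_int a0 + of_int a1 * omega + of_int a2 * omega ^ 2 + of_int a3 * omega ^ 3
             | a0 a1 a2 a3 :: int. True}"

definition c2v :: "complex \<Rightarrow> real^2" where
  "c2v z = vector [Re z, Im z]"

definition grid_operator :: "real^2^2 \<Rightarrow> bool" where
  "grid_operator G \<longleftrightarrow> (\<forall>z\<in>Zomega. \<exists>w\<in>Zomega. G *v c2v z = c2v w)"

definition special_grid_operator :: "real^2^2 \<Rightarrow> bool" where
  "special_grid_operator G \<longleftrightarrow> grid_operator G \<and> (det G = 1 \<or> det G = -1)"

text \<open>sqrt2-conjugation on Q(sqrt 2): a + b sqrt 2 \<mapsto> a - b sqrt 2 (a, b rational).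
  Outside Q(sqrt 2) it is (irrelevantly) the identity.\<close>
definition sqrt2_conj :: "real \<Rightarrow> real" where
  "sqrt2_conj x = (if \<exists>a b :: rat. x = of_rat a + of_rat b * sqrt 2
     then (THE y. \<exists>a b :: rat. x = of_rat a + of_rat b * sqrt 2 \<and> y = of_rat a - of_rat b * sqrt 2)
     else x)"

definition mat_bullet :: "real^2^2 \<Rightarrow> real^2^2" where
  "mat_bullet G = (\<chi> i j. sqrt2_conj (G $ i $ j))"

definition matpow :: "real^'n^'n \<Rightarrow> nat \<Rightarrow> real^'n^'n" where
  "matpow A n = (((**) A) ^^ n) (mat 1)"

definition matpowi :: "real^'n^'n \<Rightarrow> int \<Rightarrow> real^'n^'n" where
  "matpowi A k = (if 0 \<le> k then matpow A (nat k) else matpow (matrix_inv A) (nat (- k)))"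

definition lam :: real where
  "lam = 1 + sqrt 2"

definition sigma :: "real^2^2" where
  "sigma = sqrt (inverse lam) *\<^sub>R vector [vector [lam, 0], vector [0, 1]]"

definition tau :: "real^2^2" where
  "tau = sqrt (inverse lam) *\<^sub>R vector [vector [1, 0], vector [0, - lam]]"

end

theory Submission
  imports Defs
begin

text \<open>Both sigma and tau are diagonal, and conjugating G by diagonal matrices only rescales its
  entries, so sigma^k G sigma^k = diag(lam^k, 1) G diag(1, lam^-k) and
  (-tau)^k H tau^k = diag((-1/lam)^k, 1) H diag(1, (-1/lam)^-k). The outer factors have
  determinants multiplying to 1, and they are grid operators: in coordinates,
  Z[omega] consists of the points (x + p/sqrt 2, y + q/sqrt 2) with x, y, p, q integers and p + q
  even, and multiplication by a + b sqrt 2 with a odd (such as lam and 1/lam) preserves this shape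
  and the parity of p. Finally, sqrt 2-conjugation is a field automorphism of Q(sqrt 2), which
  contains all entries of a grid operator, and it sends lam to -1/lam.\<close>

lemma sqrt_2_not_rat: "sqrt 2 \<notin> \<rat>"
proof
  assume "sqrt 2 \<in> \<rat>"
  moreover have "algebraic_int (sqrt 2)"
    by (intro algebraic_int_sqrt) (metis algebraic_int_of_nat of_nat_numeral)
  ultimately obtain n :: int where n: "sqrt 2 = of_int n"
    by (metis rational_algebraic_int_is_int Ints_cases)
  have "1 < sqrt (2::real)" "sqrt (2::real) < 2"
    by (simp_all add: real_less_rsqrt real_less_lsqrt)
  then have "1 < n" "n < 2"
    unfolding n by simp_all
  then show False
    by simp
qed

definition Q_sqrt2 :: "real set" where
  "Q_sqrt2 = {of_rat a + of_rat b * sqrt 2 | a b. True}"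

lemma Q_sqrt2I: "of_rat a + of_rat b * sqrt 2 \<in> Q_sqrt2"
  unfolding Q_sqrt2_def by blast

lemma Q_sqrt2E:
  assumes "x \<in> Q_sqrt2"
  obtains a b where "x = of_rat a + of_rat b * sqrt 2"
  using assms unfolding Q_sqrt2_def by blast

lemma Q_sqrt2_coordinates_unique:
  assumes "of_rat a + of_rat b * sqrt 2 = of_rat c + of_rat d * sqrt 2"
  shows "a = c \<and> b = d"
proof (rule ccontr)
  assume "\<not> (a = c \<and> b = d)"
  with assms have "b \<noteq> d"
    by auto
  with assms have "sqrt 2 = of_rat ((c - a) / (b - d))"
    by (simp add: of_rat_diff of_rat_divide field_simps)
  then show False
    using sqrt_2_not_rat by (metis Rats_of_rat)
qed

lemma sqrt2_conj_of_rat_add_mult_sqrt2 [simp]: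
  "sqrt2_conj (of_rat a + of_rat b * sqrt 2) = of_rat a - of_rat b * sqrt 2"
  unfolding sqrt2_conj_def
  by (subst if_P, blast, rule the_equality) (auto dest: Q_sqrt2_coordinates_unique)

lemma Q_sqrt2_of_rat [simp]: "of_rat a \<in> Q_sqrt2"
  and sqrt2_conj_of_rat [simp]: "sqrt2_conj (of_rat a) = of_rat a"
  using Q_sqrt2I[of a 0] sqrt2_conj_of_rat_add_mult_sqrt2[of a 0] by simp_all

lemma Q_sqrt2_0 [simp]: "0 \<in> Q_sqrt2" and Q_sqrt2_1 [simp]: "1 \<in> Q_sqrt2"
  and sqrt2_conj_0 [simp]: "sqrt2_conj 0 = 0" and sqrt2_conj_1 [simp]: "sqrt2_conj 1 = 1"
  using Q_sqrt2_of_rat[of 0] Q_sqrt2_of_rat[of 1] sqrt2_conj_of_rat[of 0] sqrt2_conj_of_rat[of 1]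
  by simp_all

lemma Q_sqrt2_mult_sqrt2_conj:
  assumes "x \<in> Q_sqrt2" "y \<in> Q_sqrt2"
  shows "x * y \<in> Q_sqrt2 \<and> sqrt2_conj (x * y) = sqrt2_conj x * sqrt2_conj y"
proof -
  obtain a b c d where x: "x = of_rat a + of_rat b * sqrt 2" and y: "y = of_rat c + of_rat d * sqrt 2"
    using assms by (meson Q_sqrt2E)
  have "x * y = of_rat (a * c + 2 * b * d) + of_rat (a * d + b * c) * sqrt 2"
    unfolding x y by (simp add: of_rat_add of_rat_mult algebra_simps)
  moreover have "sqrt2_conj x * sqrt2_conj y
      = of_rat (a * c + 2 * b * d) - of_rat (a * d + b * c) * sqrt 2"
    unfolding x y by (simp add: of_rat_add of_rat_mult algebra_simps)
  ultimately show ?thesis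
    unfolding Q_sqrt2_def by auto
qed

lemma Q_sqrt2_mult [simp]: "x \<in> Q_sqrt2 \<Longrightarrow> y \<in> Q_sqrt2 \<Longrightarrow> x * y \<in> Q_sqrt2"
  using Q_sqrt2_mult_sqrt2_conj by blast

lemma sqrt2_conj_mult:
  "x \<in> Q_sqrt2 \<Longrightarrow> y \<in> Q_sqrt2 \<Longrightarrow> sqrt2_conj (x * y) = sqrt2_conj x * sqrt2_conj y"
  using Q_sqrt2_mult_sqrt2_conj by blast

lemma sqrt2_conj_eq_0_iff:
  assumes "x \<in> Q_sqrt2"
  shows "sqrt2_conj x = 0 \<longleftrightarrow> x = 0"
proof -
  obtain a b where x: "x = of_rat a + of_rat b * sqrt 2"
    using assms by (rule Q_sqrt2E)
  have "sqrt2_conj x = 0 \<longleftrightarrow> of_rat a + of_rat (- b) * sqrt 2 = of_rat 0 + of_rat 0 * sqrt 2"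
    by (simp add: x of_rat_minus)
  also have "\<dots> \<longleftrightarrow> a = 0 \<and> b = 0"
    using Q_sqrt2_coordinates_unique[of a "- b" 0 0] by auto
  also have "\<dots> \<longleftrightarrow> x = 0"
    using Q_sqrt2_coordinates_unique[of a b 0 0] by (auto simp: x)
  finally show ?thesis .
qed

text \<open>inverse x = sqrt2_conj x / (x * sqrt2_conj x), where the norm x * sqrt2_conj x is a nonzero
  rational.\<close>
lemma Q_sqrt2_inverse [simp]:
  assumes "x \<in> Q_sqrt2"
  shows "inverse x \<in> Q_sqrt2"
proof (cases "x = 0")
  case False
  obtain a b where x: "x = of_rat a + of_rat b * sqrt 2"
    using assms by (rule Q_sqrt2E)
  have norm: "x * sqrt2_conj x = of_rat (a\<^sup>2 - 2 * b\<^sup>2)"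
    by (simp add: x of_rat_diff of_rat_mult of_rat_power algebra_simps power2_eq_square)
  have "sqrt2_conj x \<noteq> 0"
    using False assms sqrt2_conj_eq_0_iff by blast
  with False have "inverse x = sqrt2_conj x * inverse (x * sqrt2_conj x)"
    by (simp add: inverse_mult_distrib)
  also have "\<dots> = sqrt2_conj x * of_rat (inverse (a\<^sup>2 - 2 * b\<^sup>2))"
    by (simp only: norm of_rat_inverse)
  finally have "inverse x = sqrt2_conj x * of_rat (inverse (a\<^sup>2 - 2 * b\<^sup>2))" .
  moreover have "sqrt2_conj x \<in> Q_sqrt2"
    using Q_sqrt2I[of a "- b"] by (simp add: x of_rat_minus)
  ultimately show ?thesis
    by simp
qed simp

lemma sqrt2_conj_inverse:
  assumes "x \<in> Q_sqrt2"
  shows "sqrt2_conj (inverse x) = inverse (sqrt2_conj x)"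
proof (cases "x = 0")
  case False
  have "sqrt2_conj x * sqrt2_conj (inverse x) = sqrt2_conj (x * inverse x)"
    using assms by (simp add: sqrt2_conj_mult)
  also have "\<dots> = 1"
    using False by simp
  finally show ?thesis
    by (rule inverse_unique[symmetric])
qed simp

lemma Q_sqrt2_power [simp]: "x \<in> Q_sqrt2 \<Longrightarrow> x ^ n \<in> Q_sqrt2"
  by (induction n) auto

lemma sqrt2_conj_power: "x \<in> Q_sqrt2 \<Longrightarrow> sqrt2_conj (x ^ n) = sqrt2_conj x ^ n"
  by (induction n) (auto simp: sqrt2_conj_mult)

lemma Q_sqrt2_power_int [simp]: "x \<in> Q_sqrt2 \<Longrightarrow> x powi k \<in> Q_sqrt2"
  by (cases k rule: int_cases2) (auto simp: power_int_minus)

lemma sqrt2_conj_power_int: "x \<in> Q_sqrt2 \<Longrightarrow> sqrt2_conj (x powi k) = sqrt2_conj x powi k"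
  by (cases k rule: int_cases2) (auto simp: power_int_minus sqrt2_conj_inverse sqrt2_conj_power)

lemma lam_pos: "lam > 0"
  unfolding lam_def by (simp add: add_pos_nonneg)

lemma inverse_lam: "inverse lam = sqrt 2 - 1"
  by (rule inverse_unique) (simp add: lam_def algebra_simps)

lemma Q_sqrt2_lam: "lam \<in> Q_sqrt2"
  using Q_sqrt2I[of 1 1] by (simp add: lam_def)

lemma sqrt2_conj_lam: "sqrt2_conj lam = - inverse lam"
proof -
  have "sqrt2_conj lam = 1 - sqrt 2"
    using sqrt2_conj_of_rat_add_mult_sqrt2[of 1 1] by (simp add: lam_def)
  then show ?thesis
    by (simp add: inverse_lam)
qed

text \<open>Since omega = (1 + i) / sqrt 2, the point a0 + a1 omega + a2 omega^2 + a3 omega^3 has coordinates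
  a0 + (a1 - a3) / sqrt 2 and a2 + (a1 + a3) / sqrt 2, and (a1 - a3, a1 + a3) ranges over the pairs
  of integers of equal parity.\<close>
definition Zomega_lattice :: "(real^2) set" where
  "Zomega_lattice = {v. \<exists>(x::int) (y::int) (p::int) (q::int).
     v$1 = x + p * (sqrt 2 / 2) \<and> v$2 = y + q * (sqrt 2 / 2) \<and> even (p + q)}"

lemma omega_eq: "omega = Complex (sqrt 2 / 2) (sqrt 2 / 2)"
  unfolding omega_def cis.ctr by (simp add: cos_45 sin_45)

lemma Re_Im_omega_powers:
  "Re omega = sqrt 2 / 2" "Im omega = sqrt 2 / 2"
  "Re (omega ^ 2) = 0" "Im (omega ^ 2) = 1"
  "Re (omega ^ 3) = - sqrt 2 / 2" "Im (omega ^ 3) = sqrt 2 / 2"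
  by (simp_all add: omega_eq power2_eq_square power3_eq_cube field_simps)

lemma c2v_nth [simp]: "c2v z $ 1 = Re z" "c2v z $ 2 = Im z"
  unfolding c2v_def by simp_all

lemma c2v_Zomega: "c2v ` Zomega = Zomega_lattice"
proof (intro equalityI subsetI)
  fix v assume "v \<in> c2v ` Zomega"
  then obtain a0 a1 a2 a3 :: int
    where v: "v = c2v (of_int a0 + of_int a1 * omega + of_int a2 * omega ^ 2 + of_int a3 * omega ^ 3)"
    unfolding Zomega_def by blast
  have "v$1 = a0 + (a1 - a3) * (sqrt 2 / 2)" "v$2 = a2 + (a1 + a3) * (sqrt 2 / 2)"
    unfolding v by (simp_all add: Re_Im_omega_powers field_simps)
  moreover have "even ((a1 - a3) + (a1 + a3))"
    by simp
  ultimately show "v \<in> Zomega_lattice"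
    unfolding Zomega_lattice_def by blast
next
  fix v assume "v \<in> Zomega_lattice"
  then obtain x y p q :: int
    where v: "v$1 = x + p * (sqrt 2 / 2)" "v$2 = y + q * (sqrt 2 / 2)" and "even (p + q)"
    unfolding Zomega_lattice_def by blast
  then obtain m where m: "p + q = 2 * m"
    by (metis evenE)
  define w where "w = of_int x + of_int m * omega + of_int y * omega ^ 2 + of_int (m - p) * omega ^ 3"
  have "v$2 = y + (2 * m - p) * (sqrt 2 / 2)"
    using v(2) by (simp flip: m)
  then have "v = c2v w"
    using v(1) by (simp add: vec_eq_iff forall_2 w_def Re_Im_omega_powers algebra_simps)
  moreover have "w \<in> Zomega"
    unfolding w_def Zomega_def by blast
  ultimately show "v \<in> c2v ` Zomega"
    by blast
qed

lemma grid_operator_iff_lattice: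
  "grid_operator G \<longleftrightarrow> (\<forall>v\<in>Zomega_lattice. G *v v \<in> Zomega_lattice)"
  unfolding grid_operator_def c2v_Zomega[symmetric] by blast

lemma grid_operator_mult:
  "grid_operator G \<Longrightarrow> grid_operator H \<Longrightarrow> grid_operator (G ** H)"
  by (simp add: grid_operator_iff_lattice matrix_vector_mul_assoc[symmetric])

lemma Zomega_lattice_subset_Q_sqrt2:
  assumes "v \<in> Zomega_lattice"
  shows "v $ i \<in> Q_sqrt2"
proof -
  have "of_int x + of_int p * (sqrt 2 / 2) \<in> Q_sqrt2" for x p :: int
    using Q_sqrt2I[of "of_int x" "of_int p / 2"] by (simp add: of_rat_divide)
  then show ?thesis
    using assms exhaust_2[of i] unfolding Zomega_lattice_def by auto
qed

lemma grid_operator_entries_Q_sqrt2: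
  assumes "grid_operator G"
  shows "G $ i $ j \<in> Q_sqrt2"
proof -
  have "axis j 1 \<in> Zomega_lattice"
    using exhaust_2[of j]
  proof (elim disjE)
    assume "j = 1"
    then show ?thesis
      unfolding Zomega_lattice_def by (intro CollectI exI[of _ 1] exI[of _ 0]) (simp add: axis_def)
  next
    assume "j = 2"
    then show ?thesis
      unfolding Zomega_lattice_def
      by (intro CollectI exI[of _ 0] exI[of _ 1] exI[of _ 0]) (simp add: axis_def)
  qed
  then have "column j G \<in> Zomega_lattice"
    using assms by (simp add: grid_operator_iff_lattice flip: matrix_vector_mult_basis)
  then show ?thesis
    using Zomega_lattice_subset_Q_sqrt2[of "column j G" i] by (simp add: column_def)
qed

definition Zsqrt2_odd :: "real set" where
  "Zsqrt2_odd = {of_int m + of_int n * sqrt 2 | (m::int) (n::int). odd m}"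

lemma Zsqrt2_odd_1: "1 \<in> Zsqrt2_odd"
  unfolding Zsqrt2_odd_def by (intro CollectI exI[of _ 1] exI[of _ 0]) simp

lemma Zsqrt2_odd_mult:
  assumes "c \<in> Zsqrt2_odd" "d \<in> Zsqrt2_odd"
  shows "c * d \<in> Zsqrt2_odd"
proof -
  obtain m n m' n' :: int where c: "c = m + n * sqrt 2" "odd m" and d: "d = m' + n' * sqrt 2" "odd m'"
    using assms unfolding Zsqrt2_odd_def by blast
  have "c * d = of_int (m * m' + 2 * n * n') + of_int (m * n' + n * m') * sqrt 2"
    unfolding c d by (simp add: algebra_simps)
  moreover have "odd (m * m' + 2 * n * n')"
    using c d by simp
  ultimately show ?thesis
    unfolding Zsqrt2_odd_def by blast
qed

lemma Zsqrt2_odd_power: "c \<in> Zsqrt2_odd \<Longrightarrow> c ^ n \<in> Zsqrt2_odd"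
  by (induction n) (simp_all add: Zsqrt2_odd_1 Zsqrt2_odd_mult)

lemma power_int_lam_in_Zsqrt2_odd: "lam powi k \<in> Zsqrt2_odd"
proof -
  have "lam \<in> Zsqrt2_odd"
    unfolding Zsqrt2_odd_def lam_def by (intro CollectI exI[of _ 1]) simp
  moreover have "inverse lam \<in> Zsqrt2_odd"
    unfolding Zsqrt2_odd_def inverse_lam by (intro CollectI exI[of _ "-1"] exI[of _ 1]) simp
  ultimately show ?thesis
    by (cases k rule: int_cases2) (simp_all add: power_int_minus Zsqrt2_odd_power flip: power_inverse)
qed

lemma Zsqrt2_odd_mult_coordinate:
  fixes x p :: int
  assumes "c \<in> Zsqrt2_odd"
  obtains x' p' :: int where "c * (x + p * (sqrt 2 / 2)) = x' + p' * (sqrt 2 / 2)" "even p' = even p"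
proof -
  obtain m n :: int where c: "c = m + n * sqrt 2" "odd m"
    using assms unfolding Zsqrt2_odd_def by blast
  have "c * (x + p * (sqrt 2 / 2)) = of_int (m * x + n * p) + of_int (m * p + 2 * n * x) * (sqrt 2 / 2)"
    unfolding c by (simp add: algebra_simps)
  moreover have "even (m * p + 2 * n * x) = even p"
    using c by simp
  ultimately show ?thesis
    using that by blast
qed

definition diag2 :: "real \<Rightarrow> real \<Rightarrow> real^2^2" where
  "diag2 a b = (\<chi> i j. if i = j then (if i = 1 then a else b) else 0)"

lemma diag2_mult_vec: "diag2 a b *v v = (\<chi> i. (if i = 1 then a else b) * v $ i)"
  by (simp add: vec_eq_iff forall_2 matrix_vector_mult_def sum_2 diag2_def)

lemma grid_operator_diag2:
  assumes "c \<in> Zsqrt2_odd"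
  shows "grid_operator (diag2 c 1)" "grid_operator (diag2 1 c)"
proof -
  have "diag2 c 1 *v v \<in> Zomega_lattice \<and> diag2 1 c *v v \<in> Zomega_lattice"
    if lattice: "v \<in> Zomega_lattice" for v
  proof -
    obtain x y p q :: int
      where v: "v$1 = x + p * (sqrt 2 / 2)" "v$2 = y + q * (sqrt 2 / 2)" and pq: "even (p + q)"
      using lattice unfolding Zomega_lattice_def by blast
    obtain x' p' :: int where x': "c * v$1 = x' + p' * (sqrt 2 / 2)" "even p' = even p"
      using Zsqrt2_odd_mult_coordinate[OF assms] v(1) by metis
    obtain y' q' :: int where y': "c * v$2 = y' + q' * (sqrt 2 / 2)" "even q' = even q"
      using Zsqrt2_odd_mult_coordinate[OF assms] v(2) by metis
    have "diag2 c 1 *v v \<in> Zomega_lattice"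
      unfolding Zomega_lattice_def diag2_mult_vec using v x' pq
      by (intro CollectI exI[of _ x'] exI[of _ y] exI[of _ p'] exI[of _ q]) simp
    moreover have "diag2 1 c *v v \<in> Zomega_lattice"
      unfolding Zomega_lattice_def diag2_mult_vec using v y' pq
      by (intro CollectI exI[of _ x] exI[of _ y'] exI[of _ p] exI[of _ q']) simp
    ultimately show ?thesis ..
  qed
  then show "grid_operator (diag2 c 1)" "grid_operator (diag2 1 c)"
    unfolding grid_operator_iff_lattice by blast+
qed

lemma diag2_mult: "diag2 a b ** diag2 c d = diag2 (a * c) (b * d)"
  by (simp add: vec_eq_iff matrix_matrix_mult_def sum_2 forall_2 diag2_def)

lemma mat_1_eq_diag2: "mat 1 = diag2 1 1"
  by (simp add: vec_eq_iff mat_def forall_2 diag2_def)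

lemma det_diag2: "det (diag2 a b) = a * b"
  by (simp add: det_2 diag2_def)

lemma matrix_inv_eqI:
  fixes A B :: "'a::comm_semiring_1^'n^'n"
  assumes "A ** B = mat 1" "B ** A = mat 1"
  shows "matrix_inv A = B"
  unfolding matrix_inv_def
proof (rule some_equality)
  fix C assume C: "A ** C = mat 1 \<and> C ** A = mat 1"
  have "C = C ** (A ** B)"
    using assms(1) by (simp add: matrix_mul_rid)
  also have "\<dots> = (C ** A) ** B"
    by (simp add: matrix_mul_assoc)
  also have "\<dots> = B"
    using C by (simp add: matrix_mul_lid)
  finally show "C = B" .
qed (use assms in blast)

lemma matpowi_diag2:
  assumes "a \<noteq> 0" "b \<noteq> 0"
  shows "matpowi (diag2 a b) k = diag2 (a powi k) (b powi k)"
proof -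
  have matpow: "matpow (diag2 a b) n = diag2 (a ^ n) (b ^ n)" for a b n
    by (induction n) (simp_all add: matpow_def mat_1_eq_diag2 diag2_mult)
  have "matrix_inv (diag2 a b) = diag2 (inverse a) (inverse b)"
    using assms by (intro matrix_inv_eqI) (simp_all add: diag2_mult mat_1_eq_diag2)
  then show ?thesis
    by (cases k rule: int_cases2)
      (simp_all add: matpowi_def matpow power_int_minus power_inverse)
qed

lemma diag2_sandwich_nth:
  "(diag2 a b ** G ** diag2 c d) $ i $ j = (if i = 1 then a else b) * G $ i $ j * (if j = 1 then c else d)"
  using exhaust_2[of i] exhaust_2[of j]
  by (auto simp: matrix_matrix_mult_def sum_2 diag2_def)

lemma diag2_sandwich_rebalance:
  assumes "a * d = 1" "b * c = 1"
  shows "diag2 a b ** G ** diag2 c d = diag2 (a * c) 1 ** G ** diag2 1 (b * d)"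
proof -
  have "a * c * (b * d) = 1"
    using assms by (metis mult.assoc mult.left_commute mult_1_right)
  then show ?thesis
    using assms by (simp add: vec_eq_iff forall_2 diag2_sandwich_nth algebra_simps)
qed

lemma mat_bullet_diag2_sandwich:
  assumes "\<And>i j. G $ i $ j \<in> Q_sqrt2" "a \<in> Q_sqrt2" "b \<in> Q_sqrt2" "c \<in> Q_sqrt2" "d \<in> Q_sqrt2"
  shows "mat_bullet (diag2 a b ** G ** diag2 c d)
    = diag2 (sqrt2_conj a) (sqrt2_conj b) ** mat_bullet G ** diag2 (sqrt2_conj c) (sqrt2_conj d)"
  using assms by (simp add: vec_eq_iff forall_2 diag2_sandwich_nth mat_bullet_def sqrt2_conj_mult)

lemma sigma_sandwich:
  "matpowi sigma k ** G ** matpowi sigma k = diag2 (lam powi k) 1 ** G ** diag2 1 (lam powi (- k))"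
proof -
  define s where "s = sqrt (inverse lam)"
  have s: "s \<noteq> 0" "s * s = inverse lam"
    using lam_pos unfolding s_def by simp_all
  have "sigma = diag2 (s * lam) s"
    by (simp add: vec_eq_iff forall_2 diag2_def sigma_def s_def)
  then have "matpowi sigma k = diag2 ((s * lam) powi k) (s powi k)"
    using s lam_pos by (metis matpowi_diag2 mult_eq_0_iff less_irrefl)
  moreover have "(s * lam) powi k * s powi k = 1" "s powi k * (s * lam) powi k = 1"
    using s lam_pos by (simp_all flip: power_int_mult_distrib add: field_simps)
  moreover have "(s * lam) powi k * (s * lam) powi k = lam powi k"
    using s lam_pos by (simp flip: power_int_mult_distrib add: field_simps)
  moreover have "s powi k * s powi k = lam powi (- k)"
    using s by (simp flip: power_int_mult_distrib add: power_int_minus power_int_inverse)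
  ultimately show ?thesis
    by (simp add: diag2_sandwich_rebalance)
qed

lemma tau_sandwich:
  "matpowi (- tau) k ** G ** matpowi tau k
    = diag2 ((- inverse lam) powi k) 1 ** G ** diag2 1 ((- inverse lam) powi (- k))"
proof -
  define s where "s = sqrt (inverse lam)"
  have s: "s \<noteq> 0" "s * s = inverse lam"
    using lam_pos unfolding s_def by simp_all
  have "- tau = diag2 (- s) (s * lam)" "tau = diag2 s (- s * lam)"
    by (simp_all add: vec_eq_iff forall_2 diag2_def tau_def s_def)
  then have "matpowi (- tau) k = diag2 ((- s) powi k) ((s * lam) powi k)"
    "matpowi tau k = diag2 (s powi k) ((- s * lam) powi k)"
    using s lam_pos by (metis matpowi_diag2 mult_eq_0_iff neg_equal_0_iff_equal less_irrefl)+
  moreover have "(- s) powi k * (- s * lam) powi k = 1" "(s * lam) powi k * s powi k = 1"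
    using s lam_pos by (simp_all flip: power_int_mult_distrib add: field_simps)
  moreover have "(- s) powi k * s powi k = (- inverse lam) powi k"
    using s by (simp flip: power_int_mult_distrib)
  moreover have "(s * lam) powi k * (- s * lam) powi k = (- inverse lam) powi (- k)"
    using s lam_pos by (simp flip: power_int_mult_distrib add: power_int_minus power_int_inverse field_simps)
  ultimately show ?thesis
    by (simp add: diag2_sandwich_rebalance)
qed

theorem lemma5p42:
  fixes G :: "real^2^2" and k :: int
  assumes "special_grid_operator G"
  shows "special_grid_operator (matpowi sigma k ** G ** matpowi sigma k)
     \<and> mat_bullet (matpowi sigma k ** G ** matpowi sigma k)
         = matpowi (- tau) k ** mat_bullet G ** matpowi tau k"
proof -
  have grid: "grid_operator G" and det: "det G = 1 \<or> det G = -1"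
    using assms unfolding special_grid_operator_def by auto
  have lam_k: "lam powi k \<in> Zsqrt2_odd" "lam powi (- k) \<in> Zsqrt2_odd"
    by (rule power_int_lam_in_Zsqrt2_odd)+
  have "grid_operator (diag2 (lam powi k) 1 ** G ** diag2 1 (lam powi (- k)))"
    using grid lam_k by (intro grid_operator_mult grid_operator_diag2)
  moreover have "det (diag2 (lam powi k) 1 ** G ** diag2 1 (lam powi (- k))) = det G"
    using lam_pos by (simp add: det_mul det_diag2 power_int_minus)
  moreover have "mat_bullet (diag2 (lam powi k) 1 ** G ** diag2 1 (lam powi (- k)))
      = diag2 ((- inverse lam) powi k) 1 ** mat_bullet G ** diag2 1 ((- inverse lam) powi (- k))"
    using grid_operator_entries_Q_sqrt2[OF grid] Q_sqrt2_lam
    by (simp add: mat_bullet_diag2_sandwich sqrt2_conj_power_int sqrt2_conj_lam)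
  ultimately show ?thesis
    using det unfolding special_grid_operator_def sigma_sandwich tau_sandwich by simp
qed

end
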